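(* Let $q\equiv 3\pmod 4$ be a prime power. There are absolute constants $C,c>0$ such that for every $S\subset\mathbb{F}_q^2$ with $|S|\ge C q^{5/3}$, the number of rectangles with vertices in $S$ and non-zero side-lengths is at least $c\,|S|^4/q^3$.
   Context: For $u,v\in\mathbb{F}_q^2$, $u\cdot v=u_1v_1+u_2v_2$. Four points $x,z,y,t\in\mathbb{F}_q^2$ form a rectangle with vertices in the cyclic order $x,z,y,t$ if $(x-z)\cdot(y-z)=0$, $(z-y)\cdot(t-y)=0$, $(y-t)\cdot(x-t)=0$ and $(t-x)\cdot(z-x)=0$; the length of a side $uv$ is $(u-v)\cdot(u-v)$. Rectangles are counted as ordered quadruples of vertices. *)

theory Defs
  imports "HOL-Algebra.Algebra"
begin

definition pdot :: "('a, 'b) ring_scheme \<Rightarrow> 'a \<times> 'a \<Rightarrow> 'a \<times> 'a \<Rightarrow> 'a" where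
  "pdot R u v = (fst u \<otimes>\<^bsub>R\<^esub> fst v) \<oplus>\<^bsub>R\<^esub> (snd u \<otimes>\<^bsub>R\<^esub> snd v)"

definition pminus :: "('a, 'b) ring_scheme \<Rightarrow> 'a \<times> 'a \<Rightarrow> 'a \<times> 'a \<Rightarrow> 'a \<times> 'a" where
  "pminus R u v = (fst u \<ominus>\<^bsub>R\<^esub> fst v, snd u \<ominus>\<^bsub>R\<^esub> snd v)"

definition side_len :: "('a, 'b) ring_scheme \<Rightarrow> 'a \<times> 'a \<Rightarrow> 'a \<times> 'a \<Rightarrow> 'a" where
  "side_len R u v = pdot R (pminus R u v) (pminus R u v)"

text \<open>Rectangle with vertices in cyclic order x, z, y, t.\<close>
definition is_rectangle :: "('a, 'b) ring_scheme \<Rightarrow> 'a \<times> 'a \<Rightarrow> 'a \<times> 'a \<Rightarrow> 'a \<times> 'a \<Rightarrow> 'a \<times> 'a \<Rightarrow> bool" where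
  "is_rectangle R x z y t \<longleftrightarrow>
     pdot R (pminus R x z) (pminus R y z) = \<zero>\<^bsub>R\<^esub> \<and>
     pdot R (pminus R z y) (pminus R t y) = \<zero>\<^bsub>R\<^esub> \<and>
     pdot R (pminus R y t) (pminus R x t) = \<zero>\<^bsub>R\<^esub> \<and>
     pdot R (pminus R t x) (pminus R z x) = \<zero>\<^bsub>R\<^esub>"

definition rectangles_nz :: "('a, 'b) ring_scheme \<Rightarrow> ('a \<times> 'a) set \<Rightarrow> (('a \<times> 'a) \<times> ('a \<times> 'a) \<times> ('a \<times> 'a) \<times> ('a \<times> 'a)) set" where
  "rectangles_nz R S = {(x, z, y, t). x \<in> S \<and> z \<in> S \<and> y \<in> S \<and> t \<in> S \<and>
     is_rectangle R x z y t \<and>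
     side_len R x z \<noteq> \<zero>\<^bsub>R\<^esub> \<and> side_len R z y \<noteq> \<zero>\<^bsub>R\<^esub> \<and>
     side_len R y t \<noteq> \<zero>\<^bsub>R\<^esub> \<and> side_len R t x \<noteq> \<zero>\<^bsub>R\<^esub>}"

end

theory Submission
  imports Defs "HOL-Analysis.Convex"
begin

text \<open>Call two pairs (x, y), (z, t) of points of S equivalent if x + y = z + t and
  |x - y|^2 = |z - t|^2, i.e. they are the diagonals of a parallelogram with equal diagonals.
  By polarization 4 (x - z).(y - z) = |z - t|^2 - |x - y|^2, so in odd characteristic x, z, y, t
  is a rectangle. For q = 3 (mod 4) the element -1 is not a square, hence distinct points have
  non-zero squared distance, and all sides are non-zero unless {z, t} = {x, y}. The key
  (x + y, |x - y|^2) takes at most q^3 values, so by Cauchy-Schwarz there are at least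
  |S|^4 / q^3 equivalent pairs of pairs, of which at most 2 |S|^2 are trivial; for
  |S| >= 2 q^(5/3) the trivial ones are at most half of them.\<close>

definition padd :: "('a, 'b) ring_scheme \<Rightarrow> 'a \<times> 'a \<Rightarrow> 'a \<times> 'a \<Rightarrow> 'a \<times> 'a" where
  "padd R u v = (fst u \<oplus>\<^bsub>R\<^esub> fst v, snd u \<oplus>\<^bsub>R\<^esub> snd v)"

lemma (in domain) one_plus_one_neq_zero_if_odd_card:
  assumes "finite (carrier R)" "odd (card (carrier R))"
  shows "\<one> \<oplus> \<one> \<noteq> \<zero>"
proof
  assume "\<one> \<oplus> \<one> = \<zero>"
  then have "add.ord \<one> dvd 2"
    by (simp add: add.pow_eq_id[symmetric] numeral_2_eq_2 add_pow_def)
  moreover have "add.ord \<one> dvd card (carrier R)"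
    using add.ord_dvd_group_order assms(1) by (simp add: order_def)
  ultimately have "add.ord \<one> = 1"
    using assms(2) by (metis two_is_prime_nat prime_nat_iff)
  then show False
    using add.ord_eq_1 by simp
qed

lemma (in field) square_neq_minus_one_if_card_mod_4_eq_3:
  assumes "finite (carrier R)" "card (carrier R) mod 4 = 3" "i \<in> carrier R"
  shows "i \<otimes> i \<noteq> \<ominus> \<one>"
proof
  assume i2: "i \<otimes> i = \<ominus> \<one>"
  interpret M: group "Multiplicative_Group.mult_of R"
    by (rule field_mult_group)
  have "i \<noteq> \<zero>"
    using i2 assms(3) by (metis l_null minus_minus minus_zero one_closed one_not_zero)
  then have iM: "i \<in> carrier (Multiplicative_Group.mult_of R)"
    using assms(3) by simp
  have sq: "i [^] (2::nat) = \<ominus> \<one>"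
    using i2 assms(3) by (simp add: numeral_2_eq_2)
  have "i [^] (4::nat) = i [^] (2::nat) \<otimes> i [^] (2::nat)"
    using nat_pow_mult[OF assms(3), of 2 2] by simp
  also have "\<dots> = \<one>"
    unfolding sq by (simp add: l_minus r_minus)
  finally have "M.ord i dvd 4"
    using M.pow_eq_id[OF iM] by (simp add: Multiplicative_Group.nat_pow_mult_of)
  moreover have "M.ord i dvd card (carrier R) - 1"
    using M.ord_dvd_group_order[OF iM] order_mult_of[OF assms(1)] by (simp only: order_def[of R])
  moreover have "card (carrier R) - 1 = 4 * (card (carrier R) div 4) + 2"
    using mult_div_mod_eq[of 4 "card (carrier R)"] assms(2) by linarith
  ultimately have "M.ord i dvd 2"
    by (metis dvd_add_right_iff dvd_mult2)
  then have "i [^] (2::nat) = \<one>"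
    using M.pow_eq_id[OF iM] by (simp add: Multiplicative_Group.nat_pow_mult_of)
  then have "\<one> \<oplus> \<one> = \<zero>"
    using sq by (metis l_neg one_closed)
  moreover have "odd (card (carrier R))"
    using assms(2) by presburger
  ultimately show False
    using one_plus_one_neq_zero_if_odd_card assms(1) by blast
qed

lemma (in field) sum_of_squares_eq_zero:
  assumes no_sqrt: "\<And>i. i \<in> carrier R \<Longrightarrow> i \<otimes> i \<noteq> \<ominus> \<one>"
    and ab: "a \<in> carrier R" "b \<in> carrier R" "a \<otimes> a \<oplus> b \<otimes> b = \<zero>"
  shows "a = \<zero> \<and> b = \<zero>"
proof -
  have "b = \<zero>"
  proof (rule ccontr)
    assume "b \<noteq> \<zero>"
    then have "b \<in> Units R"
      using ab(2) field_Units by simp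
    define c where "c = inv b"
    have c: "c \<in> carrier R" "b \<otimes> c = \<one>"
      using \<open>b \<in> Units R\<close> unfolding c_def by simp_all
    have "(a \<otimes> c) \<otimes> (a \<otimes> c) = (a \<otimes> a \<oplus> b \<otimes> b) \<otimes> (c \<otimes> c) \<ominus> (b \<otimes> c) \<otimes> (b \<otimes> c)"
      using ab(1,2) c(1) by algebra
    also have "\<dots> = \<ominus> \<one>"
      using ab c by (simp add: minus_eq)
    finally show False
      using no_sqrt[of "a \<otimes> c"] ab(1) c(1) by simp
  qed
  moreover have "a = \<zero>"
    using ab \<open>b = \<zero>\<close> by (simp add: integral_iff)
  ultimately show ?thesis
    by simp
qed

lemma (in field) side_len_eq_zero_iff:
  assumes "\<And>i. i \<in> carrier R \<Longrightarrow> i \<otimes> i \<noteq> \<ominus> \<one>"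
    and "u \<in> carrier R \<times> carrier R" "v \<in> carrier R \<times> carrier R"
  shows "side_len R u v = \<zero> \<longleftrightarrow> u = v"
proof
  assume "side_len R u v = \<zero>"
  then have "fst u \<ominus> fst v = \<zero> \<and> snd u \<ominus> snd v = \<zero>"
    using assms by (intro sum_of_squares_eq_zero)
      (auto simp: side_len_def pdot_def pminus_def)
  then show "u = v"
    using assms(2,3) by (auto simp: prod_eq_iff)
next
  assume "u = v"
  moreover have diff_self: "a \<ominus> a = \<zero>" if "a \<in> carrier R" for a
    using that by (simp add: r_right_minus_eq)
  ultimately show "side_len R u v = \<zero>"
    using assms(3) by (auto simp: side_len_def pdot_def pminus_def diff_self)
qed

lemma (in abelian_group) padd_commute:
  assumes "u \<in> carrier G \<times> carrier G" "v \<in> carrier G \<times> carrier G"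
  shows "padd G u v = padd G v u"
  using assms by (auto simp: padd_def a_comm)

lemma (in abelian_group) padd_left_cancel:
  assumes "u \<in> carrier G \<times> carrier G" "v \<in> carrier G \<times> carrier G" "w \<in> carrier G \<times> carrier G"
  shows "padd G u v = padd G u w \<longleftrightarrow> v = w"
  using assms by (auto simp: padd_def prod_eq_iff)

lemma (in abelian_group) padd_right_cancel:
  assumes "u \<in> carrier G \<times> carrier G" "v \<in> carrier G \<times> carrier G" "w \<in> carrier G \<times> carrier G"
  shows "padd G u w = padd G v w \<longleftrightarrow> u = v"
  using assms by (auto simp: padd_def prod_eq_iff)

lemma (in cring) side_len_closed:
  assumes "u \<in> carrier R \<times> carrier R" "v \<in> carrier R \<times> carrier R"
  shows "side_len R u v \<in> carrier R"
  using assms by (auto simp: side_len_def pdot_def pminus_def)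

lemma (in cring) side_len_commute:
  assumes "u \<in> carrier R \<times> carrier R" "v \<in> carrier R \<times> carrier R"
  shows "side_len R u v = side_len R v u"
proof -
  obtain u1 u2 v1 v2 where "u = (u1, u2)" "v = (v1, v2)"
    by (metis prod.exhaust)
  with assms show ?thesis
    unfolding side_len_def pdot_def pminus_def fst_conv snd_conv by auto algebra
qed

text \<open>Polarization: with \<open>t = x + y - z\<close> one has \<open>z - t = -((x - z) + (y - z))\<close> and
  \<open>x - y = (x - z) - (y - z)\<close>.\<close>
lemma (in cring) four_pdot_eq_side_len_diff:
  assumes "x \<in> carrier R \<times> carrier R" "y \<in> carrier R \<times> carrier R"
    and "z \<in> carrier R \<times> carrier R" "t \<in> carrier R \<times> carrier R"
    and mid: "padd R x y = padd R z t"
  shows "(\<one> \<oplus> \<one>) \<otimes> (\<one> \<oplus> \<one>) \<otimes> pdot R (pminus R x z) (pminus R y z)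
    = side_len R z t \<ominus> side_len R x y"
proof -
  obtain x1 x2 y1 y2 z1 z2 t1 t2
    where pts: "x = (x1, x2)" "y = (y1, y2)" "z = (z1, z2)" "t = (t1, t2)"
    by (metis prod.exhaust)
  then have c: "x1 \<in> carrier R" "x2 \<in> carrier R" "y1 \<in> carrier R" "y2 \<in> carrier R"
    "z1 \<in> carrier R" "z2 \<in> carrier R" "t1 \<in> carrier R" "t2 \<in> carrier R"
    using assms by auto
  have "t1 = (z1 \<oplus> t1) \<ominus> z1" "t2 = (z2 \<oplus> t2) \<ominus> z2"
    using c by algebra+
  then have t: "t1 = x1 \<oplus> y1 \<ominus> z1" "t2 = x2 \<oplus> y2 \<ominus> z2"
    using mid by (simp_all add: pts padd_def)
  define a1 a2 b1 b2 where "a1 = x1 \<ominus> z1" "a2 = x2 \<ominus> z2" "b1 = y1 \<ominus> z1" "b2 = y2 \<ominus> z2"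
  have ab: "a1 \<in> carrier R" "a2 \<in> carrier R" "b1 \<in> carrier R" "b2 \<in> carrier R"
    unfolding a1_a2_b1_b2_def using c by simp_all
  have "z1 \<ominus> t1 = \<ominus> (a1 \<oplus> b1)" "z2 \<ominus> t2 = \<ominus> (a2 \<oplus> b2)"
    "x1 \<ominus> y1 = a1 \<ominus> b1" "x2 \<ominus> y2 = a2 \<ominus> b2"
    unfolding t a1_a2_b1_b2_def using c by algebra+
  then show ?thesis
    unfolding pts side_len_def pdot_def pminus_def fst_conv snd_conv a1_a2_b1_b2_def[symmetric]
    using ab by algebra
qed

lemma (in domain) pdot_eq_zero_if_diagonals_bisect_and_equal:
  assumes two: "\<one> \<oplus> \<one> \<noteq> \<zero>"
    and pts: "x \<in> carrier R \<times> carrier R" "y \<in> carrier R \<times> carrier R"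
      "z \<in> carrier R \<times> carrier R" "t \<in> carrier R \<times> carrier R"
    and mid: "padd R x y = padd R z t" and diag: "side_len R x y = side_len R z t"
  shows "pdot R (pminus R x z) (pminus R y z) = \<zero>"
proof -
  have "(\<one> \<oplus> \<one>) \<otimes> (\<one> \<oplus> \<one>) \<otimes> pdot R (pminus R x z) (pminus R y z) = \<zero>"
    using four_pdot_eq_side_len_diff[OF pts mid] diag side_len_closed[OF pts(3,4)] by simp
  moreover have "pdot R (pminus R x z) (pminus R y z) \<in> carrier R"
    using pts by (auto simp: pdot_def pminus_def)
  ultimately show ?thesis
    using two by (simp add: integral_iff)
qed

lemma (in domain) is_rectangle_if_diagonals_bisect_and_equal:
  assumes two: "\<one> \<oplus> \<one> \<noteq> \<zero>"
    and pts: "x \<in> carrier R \<times> carrier R" "y \<in> carrier R \<times> carrier R"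
      "z \<in> carrier R \<times> carrier R" "t \<in> carrier R \<times> carrier R"
    and mid: "padd R x y = padd R z t" and diag: "side_len R x y = side_len R z t"
  shows "is_rectangle R x z y t"
proof -
  have yx: "padd R y x = padd R x y" "side_len R y x = side_len R x y"
    using padd_commute[OF pts(1,2)] side_len_commute[OF pts(1,2)] by simp_all
  have tz: "padd R t z = padd R z t" "side_len R t z = side_len R z t"
    using padd_commute[OF pts(3,4)] side_len_commute[OF pts(3,4)] by simp_all
  have "pdot R (pminus R x z) (pminus R y z) = \<zero>"
    by (rule pdot_eq_zero_if_diagonals_bisect_and_equal[OF two pts(1-4) mid diag])
  moreover have "pdot R (pminus R z y) (pminus R t y) = \<zero>"
    by (rule pdot_eq_zero_if_diagonals_bisect_and_equal[OF two pts(3,4,2,1)])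
      (simp_all only: mid diag yx)
  moreover have "pdot R (pminus R y t) (pminus R x t) = \<zero>"
    by (rule pdot_eq_zero_if_diagonals_bisect_and_equal[OF two pts(2,1,4,3)])
      (simp_all only: mid diag yx tz)
  moreover have "pdot R (pminus R t x) (pminus R z x) = \<zero>"
    by (rule pdot_eq_zero_if_diagonals_bisect_and_equal[OF two pts(4,3,1,2)])
      (simp_all only: mid diag tz)
  ultimately show ?thesis
    unfolding is_rectangle_def by blast
qed

lemma (in field) rectangles_nz_memI:
  assumes no_sqrt: "\<And>i. i \<in> carrier R \<Longrightarrow> i \<otimes> i \<noteq> \<ominus> \<one>"
    and S: "S \<subseteq> carrier R \<times> carrier R" and xyzt: "x \<in> S" "y \<in> S" "z \<in> S" "t \<in> S"
    and mid: "padd R x y = padd R z t" and diag: "side_len R x y = side_len R z t"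
    and nontrivial: "(z, t) \<noteq> (x, y)" "(z, t) \<noteq> (y, x)"
  shows "(x, z, y, t) \<in> rectangles_nz R S"
proof -
  have pts: "x \<in> carrier R \<times> carrier R" "y \<in> carrier R \<times> carrier R"
    "z \<in> carrier R \<times> carrier R" "t \<in> carrier R \<times> carrier R"
    using S xyzt by auto
  have "\<one> \<oplus> \<one> \<noteq> \<zero>" \<comment> \<open>otherwise \<open>\<ominus> \<one> = \<one> \<otimes> \<one>\<close>\<close>
    using no_sqrt[of \<one>] minus_equality[of \<one> \<one>] by auto
  then have "is_rectangle R x z y t"
    by (rule is_rectangle_if_diagonals_bisect_and_equal[OF _ pts mid diag])
  moreover have "x \<noteq> z"
    using nontrivial(1) mid padd_left_cancel[OF pts(1,2,4)] by auto
  then have "side_len R x z \<noteq> \<zero>"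
    using side_len_eq_zero_iff[OF no_sqrt pts(1,3)] by simp
  moreover have "z \<noteq> y"
    using nontrivial(2) mid padd_commute[OF pts(1,2)] padd_left_cancel[OF pts(2,1,4)] by auto
  then have "side_len R z y \<noteq> \<zero>"
    using side_len_eq_zero_iff[OF no_sqrt pts(3,2)] by simp
  moreover have "y \<noteq> t"
    using nontrivial(1) mid padd_right_cancel[OF pts(1,3,2)] by auto
  then have "side_len R y t \<noteq> \<zero>"
    using side_len_eq_zero_iff[OF no_sqrt pts(2,4)] by simp
  moreover have "t \<noteq> x"
    using nontrivial(2) mid padd_commute[OF pts(1,3)] padd_left_cancel[OF pts(1,2,3)] by auto
  then have "side_len R t x \<noteq> \<zero>"
    using side_len_eq_zero_iff[OF no_sqrt pts(4,1)] by simp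
  ultimately show ?thesis
    using xyzt unfolding rectangles_nz_def by simp
qed

lemma card_squared_le_card_times_card_collisions:
  fixes f :: "'a \<Rightarrow> 'k"
  assumes "finite A" "finite K" "f ` A \<subseteq> K"
  shows "real (card A) ^ 2 \<le> real (card K) * real (card {(a, b) \<in> A \<times> A. f a = f b})"
proof -
  define fiber where "fiber k = {a \<in> A. f a = k}" for k
  have fin: "\<forall>k\<in>K. finite (fiber k)" "\<forall>k\<in>K. finite (fiber k \<times> fiber k)"
    using assms(1) by (auto simp: fiber_def)
  have disj: "\<forall>k\<in>K. \<forall>l\<in>K. k \<noteq> l \<longrightarrow> fiber k \<inter> fiber l = {}"
    "\<forall>k\<in>K. \<forall>l\<in>K. k \<noteq> l \<longrightarrow> (fiber k \<times> fiber k) \<inter> (fiber l \<times> fiber l) = {}"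
    by (auto simp: fiber_def)
  have "A = (\<Union>k\<in>K. fiber k)"
    using assms(3) by (auto simp: fiber_def)
  then have card_A: "card A = (\<Sum>k\<in>K. card (fiber k))"
    using card_UN_disjoint[OF assms(2) fin(1) disj(1)] by simp
  have collisions: "{(a, b) \<in> A \<times> A. f a = f b} = (\<Union>k\<in>K. fiber k \<times> fiber k)"
    using assms(3) by (auto simp: fiber_def)
  have card_collisions: "card {(a, b) \<in> A \<times> A. f a = f b} = (\<Sum>k\<in>K. card (fiber k) ^ 2)"
    unfolding collisions card_UN_disjoint[OF assms(2) fin(2) disj(2)]
    by (simp add: card_cartesian_product power2_eq_square)
  have "real (card A) ^ 2 = (\<Sum>k\<in>K. real (card (fiber k))) ^ 2"
    by (simp add: card_A)
  also have "\<dots> \<le> (\<Sum>k\<in>K. real (card (fiber k)) ^ 2) * real (card K)"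
    by (rule sum_squared_le_sum_of_squares)
  also have "\<dots> = real (card K) * real (card {(a, b) \<in> A \<times> A. f a = f b})"
    unfolding card_collisions by (simp add: mult.commute)
  finally show ?thesis .
qed

lemma (in field) card_pow4_le_card_rectangles_nz:
  assumes no_sqrt: "\<And>i. i \<in> carrier R \<Longrightarrow> i \<otimes> i \<noteq> \<ominus> \<one>"
    and fin: "finite (carrier R)" and S: "S \<subseteq> carrier R \<times> carrier R"
  shows "real (card S) ^ 4
    \<le> real (card (carrier R)) ^ 3 * (real (card (rectangles_nz R S)) + 2 * real (card S) ^ 2)"
proof -
  define key where "key p = (padd R (fst p) (snd p), side_len R (fst p) (snd p))" for p
  define E where "E = {(p, p') \<in> (S \<times> S) \<times> (S \<times> S). key p = key p'}"
  define trivial where "trivial = (\<lambda>p. (p, p)) ` (S \<times> S) \<union> (\<lambda>p. (p, prod.swap p)) ` (S \<times> S)"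
  define diagonals :: "('a \<times> 'a) \<times> ('a \<times> 'a) \<times> ('a \<times> 'a) \<times> ('a \<times> 'a) \<Rightarrow> _"
    where "diagonals = (\<lambda>(x, z, y, t). ((x, y), (z, t)))"
  have finS: "finite S"
    using S fin finite_subset by blast
  have "key p \<in> (carrier R \<times> carrier R) \<times> carrier R" if "p \<in> S \<times> S" for p
  proof -
    have "fst p \<in> carrier R \<times> carrier R" "snd p \<in> carrier R \<times> carrier R"
      using that S by auto
    then show ?thesis
      using side_len_closed by (auto simp: key_def padd_def)
  qed
  then have "real (card (S \<times> S)) ^ 2 \<le> real (card ((carrier R \<times> carrier R) \<times> carrier R)) * real (card E)"
    unfolding E_def using finS fin by (intro card_squared_le_card_times_card_collisions) blast+
  then have energy: "real (card S) ^ 4 \<le> real (card (carrier R)) ^ 3 * real (card E)"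
    by (simp add: card_cartesian_product power_mult_distrib power3_eq_cube flip: power_mult)
  have "E \<subseteq> trivial \<union> diagonals ` rectangles_nz R S"
  proof
    fix e assume "e \<in> E"
    then obtain x y z t where e: "e = ((x, y), (z, t))" and xyzt: "x \<in> S" "y \<in> S" "z \<in> S" "t \<in> S"
      and mid: "padd R x y = padd R z t" and diag: "side_len R x y = side_len R z t"
      by (auto simp: E_def key_def)
    show "e \<in> trivial \<union> diagonals ` rectangles_nz R S"
    proof (cases "(z, t) = (x, y) \<or> (z, t) = (y, x)")
      case True
      then show ?thesis
        using xyzt by (auto simp: e trivial_def)
    next
      case False
      then have "(x, z, y, t) \<in> rectangles_nz R S"
        using rectangles_nz_memI[OF no_sqrt S xyzt mid diag] by blast
      then show ?thesis
        unfolding e diagonals_def by (auto simp: image_iff)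
    qed
  qed
  moreover have "finite (rectangles_nz R S)"
    by (rule finite_subset[of _ "S \<times> S \<times> S \<times> S"]) (auto simp: rectangles_nz_def finS)
  ultimately have "card E \<le> card (trivial \<union> diagonals ` rectangles_nz R S)"
    using finS by (intro card_mono) (auto simp: trivial_def)
  also have "\<dots> \<le> card trivial + card (diagonals ` rectangles_nz R S)"
    by (rule card_Un_le)
  also have "\<dots> \<le> 2 * card S ^ 2 + card (rectangles_nz R S)"
  proof (rule add_mono)
    have "card trivial \<le> card ((\<lambda>p. (p, p)) ` (S \<times> S)) + card ((\<lambda>p. (p, prod.swap p)) ` (S \<times> S))"
      unfolding trivial_def by (rule card_Un_le)
    also have "\<dots> \<le> card (S \<times> S) + card (S \<times> S)"
      using finS by (intro add_mono card_image_le) simp_all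
    finally show "card trivial \<le> 2 * card S ^ 2"
      by (simp add: card_cartesian_product power2_eq_square)
    show "card (diagonals ` rectangles_nz R S) \<le> card (rectangles_nz R S)"
      using \<open>finite (rectangles_nz R S)\<close> by (rule card_image_le)
  qed
  finally have "real (card E) \<le> real (2 * card S ^ 2 + card (rectangles_nz R S))"
    by (rule of_nat_mono)
  then have "real (card (carrier R)) ^ 3 * real (card E)
      \<le> real (card (carrier R)) ^ 3 * (real (card (rectangles_nz R S)) + 2 * real (card S) ^ 2)"
    by (intro mult_left_mono) simp_all
  with energy show ?thesis
    by (rule order_trans)
qed

lemma half_quartic_le_if_quartic_le:
  fixes q s N :: real
  assumes "1 \<le> q" "2 * q powr (5/3) \<le> s" "s ^ 4 \<le> q ^ 3 * (N + 2 * s ^ 2)"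
  shows "1/2 * s ^ 4 / q ^ 3 \<le> N"
proof -
  have q3: "0 < q ^ 3"
    using assms(1) by simp
  have "q ^ 3 \<le> q powr (10/3)"
    using powr_mono[of 3 "10/3" q] powr_realpow[of q 3] assms(1) by simp
  also have "\<dots> = (q powr (5/3)) ^ 2"
    by (simp add: power2_eq_square flip: powr_add)
  finally have "4 * q ^ 3 \<le> (2 * q powr (5/3)) ^ 2"
    by (simp add: power_mult_distrib)
  also have "\<dots> \<le> s ^ 2"
    using assms(2) by (intro power_mono) simp_all
  finally have "s ^ 2 * (4 * q ^ 3) \<le> s ^ 2 * s ^ 2"
    by (intro mult_left_mono) simp_all
  then have "4 * s ^ 2 \<le> s ^ 4 / q ^ 3"
    using q3 by (simp add: pos_le_divide_eq algebra_simps flip: power_add)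
  moreover have "s ^ 4 / q ^ 3 \<le> N + 2 * s ^ 2"
    using assms(3) q3 by (simp add: pos_divide_le_eq mult.commute)
  ultimately show ?thesis
    by simp
qed

theorem lemma2p3:
  "\<exists>C>0. \<exists>c>0. \<forall>(R :: nat ring) (S :: (nat \<times> nat) set).
     field R \<longrightarrow> finite (carrier R) \<longrightarrow> card (carrier R) mod 4 = 3 \<longrightarrow>
     S \<subseteq> carrier R \<times> carrier R \<longrightarrow>
     real (card S) \<ge> C * real (card (carrier R)) powr (5/3) \<longrightarrow>
     real (card (rectangles_nz R S)) \<ge> c * real (card S) ^ 4 / real (card (carrier R)) ^ 3"
proof (rule exI[of _ 2], intro conjI exI[of _ "1/2"] allI impI)
  fix R :: "nat ring" and S :: "(nat \<times> nat) set"
  assume R: "field R" and fin: "finite (carrier R)" and q: "card (carrier R) mod 4 = 3"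
    and S: "S \<subseteq> carrier R \<times> carrier R"
    and large: "2 * real (card (carrier R)) powr (5/3) \<le> real (card S)"
  have "\<And>i. i \<in> carrier R \<Longrightarrow> i \<otimes>\<^bsub>R\<^esub> i \<noteq> \<ominus>\<^bsub>R\<^esub> \<one>\<^bsub>R\<^esub>"
    by (rule field.square_neq_minus_one_if_card_mod_4_eq_3[OF R fin q])
  then have "real (card S) ^ 4
      \<le> real (card (carrier R)) ^ 3 * (real (card (rectangles_nz R S)) + 2 * real (card S) ^ 2)"
    by (rule field.card_pow4_le_card_rectangles_nz[OF R _ fin S])
  moreover have "1 \<le> real (card (carrier R))"
    using q by simp
  ultimately show "1/2 * real (card S) ^ 4 / real (card (carrier R)) ^ 3 \<le> real (card (rectangles_nz R S))"
    using large half_quartic_le_if_quartic_le by blast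
qed simp_all

end
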